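(* In the compulsory constrained two-facility location setting described in the context, for every location profile $\mathbf{x}\in\mathbb{R}^n$, the peak of $\mathrm{cen}(\mathbf{x})$ in $AP$ is an optimal solution for the maximum cost objective, i.e. it minimizes $\max_{j}\max\{|y_1-x_j|,|y_2-x_j|\}$ over all feasible $(y_1,y_2)$.
   Context: $n$ agents have locations $x_1,\dots,x_n\in\mathbb{R}$; $\mathrm{cen}(\mathbf{x})=(\min_j x_j+\max_j x_j)/2$. $A=\{a_1\le\dots\le a_m\}$, $m\ge2$, is a multiset of alternative locations; a feasible outcome places $F_1$ at $y_1\in A$ and $F_2$ at $y_2\in A\setminus\{y_1\}$ (one copy removed). $AP=\{(a_1,a_2),\dots,(a_{m-1},a_m)\}$. Zones: $Z_1=(-\infty,\frac{a_1+a_3}{2}]$, $Z_k=(\frac{a_{k-1}+a_{k+1}}{2},\frac{a_k+a_{k+2}}{2}]$ for $2\le k\le m-2$, $Z_{m-1}=(\frac{a_{m-2}+a_m}{2},\infty)$ ($Z_1=\mathbb{R}$ if $m=2$); the peak in $AP$ of a point $z\in Z_k$ is $(a_k,a_{k+1})$. *)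

theory Defs
  imports Complex_Main
begin

(* Agents are indexed 1..n with locations x j; alternatives are indexed 1..m with
   locations a 1 <= ... <= a m (a multiset given as a sorted indexed family). *)

definition cen :: "nat \<Rightarrow> (nat \<Rightarrow> real) \<Rightarrow> real" where
  "cen n x = (Min (x ` {1..n}) + Max (x ` {1..n})) / 2"

definition max_cost :: "nat \<Rightarrow> (nat \<Rightarrow> real) \<Rightarrow> real \<Rightarrow> real \<Rightarrow> real" where
  "max_cost n x y1 y2 = Max ((\<lambda>j. max \<bar>y1 - x j\<bar> \<bar>y2 - x j\<bar>) ` {1..n})"

(* feasible outcome: F1 at a i, F2 at a j, distinct copies i \<noteq> j of the multiset A *)
definition feasible :: "nat \<Rightarrow> (nat \<Rightarrow> real) \<Rightarrow> real \<Rightarrow> real \<Rightarrow> bool" where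
  "feasible m a y1 y2 = (\<exists>i\<in>{1..m}. \<exists>j\<in>{1..m}. i \<noteq> j \<and> y1 = a i \<and> y2 = a j)"

definition zone :: "nat \<Rightarrow> (nat \<Rightarrow> real) \<Rightarrow> nat \<Rightarrow> real set" where
  "zone m a k =
     (if m = 2 then UNIV
      else if k = 1 then {.. (a 1 + a 3) / 2}
      else if k = m - 1 then {(a (m-2) + a m) / 2 <..}
      else {(a (k-1) + a (k+1)) / 2 <.. (a k + a (k+2)) / 2})"

definition is_peak :: "nat \<Rightarrow> (nat \<Rightarrow> real) \<Rightarrow> real \<Rightarrow> real \<times> real \<Rightarrow> bool" where
  "is_peak m a z p = (\<exists>k\<in>{1..m-1}. z \<in> zone m a k \<and> p = (a k, a (k+1)))"

end

theory Submission
  imports Defs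
begin

(* The largest distance from an agent to a facility is always realised by one of the two extreme
   agents, so the maximum cost of (y1, y2) is max |y_i - cen x| plus the constant half-spread of
   the profile.  It therefore suffices to show that the peak pair (a k, a (k+1)) minimises
   max |a i - c| |a j - c| over pairs of distinct indices, where c = cen x.  The zone bounds
   a (k-1) + a (k+1) <= 2c <= a k + a (k+2) say that c is at least as close to a (k+1) as to
   a (k-1), and at least as close to a k as to a (k+2); so a pair lying entirely left of k+1 or
   entirely right of k is no better, and a pair straddling k, k+1 is no better by
   monotonicity. *)

lemma max_abs_diff_endpoints:
  fixes y L R :: real
  assumes "L \<le> R"
  shows "max \<bar>y - L\<bar> \<bar>y - R\<bar> = \<bar>y - (L + R) / 2\<bar> + (R - L) / 2"
  using assms by (cases "y \<le> (L + R) / 2") (auto simp: abs_if max_def field_simps)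

lemma Max_max_abs_diff_eq:
  fixes S :: "real set" and y1 y2 :: real
  assumes "finite S" "S \<noteq> {}"
  defines "c \<equiv> (Min S + Max S) / 2"
  shows "Max ((\<lambda>s. max \<bar>y1 - s\<bar> \<bar>y2 - s\<bar>) ` S) = max \<bar>y1 - c\<bar> \<bar>y2 - c\<bar> + (Max S - Min S) / 2"
proof -
  define f where "f s = max \<bar>y1 - s\<bar> \<bar>y2 - s\<bar>" for s
  have "Max (f ` S) = max (f (Min S)) (f (Max S))"
  proof (rule antisym)
    show "Max (f ` S) \<le> max (f (Min S)) (f (Max S))"
    proof (rule Max.boundedI)
      fix v assume "v \<in> f ` S"
      then obtain s where "s \<in> S" "v = f s" by blast
      moreover have "Min S \<le> s" "s \<le> Max S" using assms(1) \<open>s \<in> S\<close> by auto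
      ultimately show "v \<le> max (f (Min S)) (f (Max S))"
        unfolding f_def by (simp add: abs_if max_def split: if_splits)
    qed (use assms in auto)
    show "max (f (Min S)) (f (Max S)) \<le> Max (f ` S)"
      using assms(1,2) by (simp add: Max_ge)
  qed
  also have "\<dots> = max (max \<bar>y1 - Min S\<bar> \<bar>y1 - Max S\<bar>) (max \<bar>y2 - Min S\<bar> \<bar>y2 - Max S\<bar>)"
    unfolding f_def by (simp add: max.assoc max.left_commute max.commute)
  also have "\<dots> = max \<bar>y1 - c\<bar> \<bar>y2 - c\<bar> + (Max S - Min S) / 2"
    using assms(1,2) by (simp add: max_abs_diff_endpoints c_def max_add_distrib_right)
  finally show ?thesis unfolding f_def .
qed

lemma max_cost_eq_cen:
  assumes "n \<ge> 1"
  shows "max_cost n x y1 y2 =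
    max \<bar>y1 - cen n x\<bar> \<bar>y2 - cen n x\<bar> + (Max (x ` {1..n}) - Min (x ` {1..n})) / 2"
  using assms Max_max_abs_diff_eq[of "x ` {1..n}" y1 y2]
  unfolding max_cost_def cen_def by (simp add: image_image)

lemma zone_upper_bound:
  assumes "c \<in> zone m a k" "1 \<le> k" "k + 2 \<le> m"
  shows "2 * c \<le> a k + a (k + 2)"
  using assms unfolding zone_def
  by (auto simp: numeral_3_eq_3 numeral_2_eq_2 split: if_splits)

lemma zone_lower_bound:
  assumes "c \<in> zone m a k" "2 \<le> k" "k + 1 \<le> m"
  shows "a (k - 1) + a (k + 1) \<le> 2 * c"
  using assms unfolding zone_def
  by (auto simp: numeral_3_eq_3 numeral_2_eq_2 split: if_splits)

lemma adjacent_pair_minimal_ordered: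
  fixes a :: "nat \<Rightarrow> real" and c :: real
  assumes mono: "\<And>i j. 1 \<le> i \<Longrightarrow> i \<le> j \<Longrightarrow> j \<le> m \<Longrightarrow> a i \<le> a j"
    and k: "1 \<le> k" "k + 1 \<le> m"
    and upper: "k + 2 \<le> m \<Longrightarrow> 2 * c \<le> a k + a (k + 2)"
    and lower: "2 \<le> k \<Longrightarrow> a (k - 1) + a (k + 1) \<le> 2 * c"
    and ij: "1 \<le> i" "i < j" "j \<le> m"
  shows "max \<bar>a k - c\<bar> \<bar>a (k + 1) - c\<bar> \<le> max \<bar>a i - c\<bar> \<bar>a j - c\<bar>"
proof -
  have "a k \<le> a (k + 1)" using mono k by simp
  consider "j \<le> k" | "k + 1 \<le> i" | "i \<le> k" "k < j" by linarith
  then show ?thesis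
  proof cases
    case 1
    then have "2 \<le> k" using ij by simp
    have "a i \<le> a (k - 1)" by (rule mono) (use ij 1 k in auto)
    moreover have "a (k - 1) \<le> a k" using mono \<open>2 \<le> k\<close> k by simp
    ultimately show ?thesis using lower \<open>2 \<le> k\<close> \<open>a k \<le> a (k + 1)\<close>
      by (simp add: abs_if max_def split: if_splits)
  next
    case 2
    then have "k + 2 \<le> m" using ij by simp
    have "a (k + 2) \<le> a j" using mono ij 2 by simp
    moreover have "a (k + 1) \<le> a (k + 2)" using mono \<open>k + 2 \<le> m\<close> k by simp
    ultimately show ?thesis using upper \<open>k + 2 \<le> m\<close> \<open>a k \<le> a (k + 1)\<close>
      by (simp add: abs_if max_def split: if_splits)
  next
    case 3
    then have "a i \<le> a k" "a (k + 1) \<le> a j" using mono ij k by simp_all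
    then show ?thesis using \<open>a k \<le> a (k + 1)\<close> by (simp add: abs_if max_def split: if_splits)
  qed
qed

lemma adjacent_pair_minimal:
  fixes a :: "nat \<Rightarrow> real" and c :: real
  assumes mono: "\<And>i j. 1 \<le> i \<Longrightarrow> i \<le> j \<Longrightarrow> j \<le> m \<Longrightarrow> a i \<le> a j"
    and k: "1 \<le> k" "k + 1 \<le> m"
    and upper: "k + 2 \<le> m \<Longrightarrow> 2 * c \<le> a k + a (k + 2)"
    and lower: "2 \<le> k \<Longrightarrow> a (k - 1) + a (k + 1) \<le> 2 * c"
    and ij: "i \<in> {1..m}" "j \<in> {1..m}" "i \<noteq> j"
  shows "max \<bar>a k - c\<bar> \<bar>a (k + 1) - c\<bar> \<le> max \<bar>a i - c\<bar> \<bar>a j - c\<bar>"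
proof (cases "i < j")
  case True
  then show ?thesis using adjacent_pair_minimal_ordered[OF mono k upper lower] ij by auto
next
  case False
  then have "j < i" using ij by simp
  then show ?thesis
    using adjacent_pair_minimal_ordered[OF mono k upper lower, of j i] ij by (auto simp: max.commute)
qed

theorem lemma3:
  fixes n m :: nat and x a :: "nat \<Rightarrow> real" and p :: "real \<times> real"
  assumes "n \<ge> 1" and "m \<ge> 2"
    and "\<And>i j. 1 \<le> i \<Longrightarrow> i \<le> j \<Longrightarrow> j \<le> m \<Longrightarrow> a i \<le> a j"
    and "is_peak m a (cen n x) p"
  shows "feasible m a (fst p) (snd p) \<and>
         (\<forall>y1 y2. feasible m a y1 y2 \<longrightarrow>
            max_cost n x (fst p) (snd p) \<le> max_cost n x y1 y2)"
proof -
  obtain k where k: "1 \<le> k" "k + 1 \<le> m" "cen n x \<in> zone m a k" and p: "p = (a k, a (k + 1))"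
    using assms(2,4) unfolding is_peak_def by force
  have "feasible m a (fst p) (snd p)"
    unfolding feasible_def p using k by (intro bexI[of _ k] bexI[of _ "k + 1"]) auto
  moreover have "max_cost n x (fst p) (snd p) \<le> max_cost n x y1 y2" if y12: "feasible m a y1 y2" for y1 y2
  proof -
    obtain i j where ij: "i \<in> {1..m}" "j \<in> {1..m}" "i \<noteq> j" and y: "y1 = a i" "y2 = a j"
      using y12 unfolding feasible_def by blast
    have "max \<bar>a k - cen n x\<bar> \<bar>a (k + 1) - cen n x\<bar> \<le> max \<bar>a i - cen n x\<bar> \<bar>a j - cen n x\<bar>"
      using adjacent_pair_minimal[of m a k, OF assms(3) k(1,2) _ _ ij]
        zone_upper_bound[OF k(3) k(1)] zone_lower_bound[OF k(3) _ k(2)] by blast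
    then show ?thesis unfolding max_cost_eq_cen[OF assms(1)] p y by simp
  qed
  ultimately show ?thesis by blast
qed

end
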